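(* Let $X$ be a variety of dimension $k$ with at worst isolated quotient singularities, let $y\in X$, and let $\varrho:(\mathbb{C}^k,0)\to(X,y)$ be the quotient map (a local biholomorphism if $y$ is smooth). Then there exists a constant $C_y\geq1$ such that $$\operatorname{ord}_y\phi\leq\operatorname{ord}_0(\phi\circ\varrho)\leq C_y\operatorname{ord}_y\phi$$ for every holomorphic germ $\phi\in\mathcal{O}_{X,y}$. If $y$ is smooth one can take $C_y=1$.
   Context: $y\in X$ is an isolated quotient singularity if there is a finite group $G_y\subset GL(k,\mathbb{C})$ acting freely on $\mathbb{C}^k\setminus\{0\}$ with $(X,y)\cong(\mathbb{C}^k,0)/G_y$; the quotient map $\varrho$ is the induced map $(\mathbb{C}^k,0)\to(\mathbb{C}^k,0)/G_y\cong(X,y)$. For $\phi\in\mathcal{O}_{X,y}$, $\operatorname{ord}_y(\phi)=\max\{s\in\mathbb{N}:\phi\in\mathfrak{m}_y^s\}$ where $\mathfrak{m}_y$ is the maximal ideal of $\mathcal{O}_{X,y}$. *)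

theory Defs
  imports "HOL-Analysis.Analysis"
begin

text \<open>Holomorphic function germs at the origin of C^k, where k = CARD('n):
  complex-differentiable (Frechet derivative complex-linear) on a ball around 0.\<close>
definition holo_germ :: "(complex^'n \<Rightarrow> complex) \<Rightarrow> bool" where
  "holo_germ f \<longleftrightarrow> (\<exists>r>0. \<forall>z\<in>ball 0 r. \<exists>L. (f has_derivative L) (at z) \<and>
       (\<forall>c v. L (c *s v) = c * L v))"

text \<open>Germs invariant under a finite linear group G: the local ring of the
  quotient (C^k,0)/G, pulled back along the quotient map.\<close>
definition inv_germs :: "(complex^'n^'n) set \<Rightarrow> (complex^'n \<Rightarrow> complex) set" where
  "inv_germs G = {f. holo_germ f \<and> (\<forall>g\<in>G. \<forall>\<^sub>F z in nhds 0. f (g *v z) = f z)}"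

definition germ_eq :: "(complex^'n \<Rightarrow> complex) \<Rightarrow> (complex^'n \<Rightarrow> complex) \<Rightarrow> bool" where
  "germ_eq f h \<longleftrightarrow> (\<forall>\<^sub>F z in nhds 0. f z = h z)"

definition max_ideal :: "(complex^'n \<Rightarrow> complex) set \<Rightarrow> (complex^'n \<Rightarrow> complex) set" where
  "max_ideal R = {f\<in>R. f 0 = 0}"

fun ideal_pow :: "(complex^'n \<Rightarrow> complex) set \<Rightarrow> nat \<Rightarrow> (complex^'n \<Rightarrow> complex) set" where
  "ideal_pow R 0 = R"
| "ideal_pow R (Suc s) = {f. f \<in> R \<and> (\<exists>(n::nat) a b. (\<forall>i<n. a i \<in> max_ideal R \<and> b i \<in> ideal_pow R s)
      \<and> germ_eq f (\<lambda>z. \<Sum>i<n. a i z * b i z))}"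

definition germ_ord :: "(complex^'n \<Rightarrow> complex) set \<Rightarrow> (complex^'n \<Rightarrow> complex) \<Rightarrow> nat" where
  "germ_ord R f = (GREATEST s. f \<in> ideal_pow R s)"

end

theory Submission
  imports Defs "HOL-Complex_Analysis.Complex_Analysis"
begin

text \<open>
  Let \<open>\<O>\<close> be the ring of germs at \<open>0 \<in> \<complex>\<^sup>k\<close> with maximal ideal \<open>m\<close>, \<open>\<O>\<^sup>G\<close> the ring of
  \<open>G\<close>-invariant germs with maximal ideal \<open>m\<^sub>G\<close>, and \<open>N = |G|\<close>. Since \<open>m\<^sub>G \<subseteq> m\<close>, the invariant
  order is at most the order in \<open>\<O>\<close>. The reverse estimate is Noether's degree bound. A germ
  \<open>x \<in> m\<close> is a root of \<open>\<Prod>\<^sub>g\<^sub>\<in>\<^sub>G (T - x \<circ> g)\<close>, whose lower coefficients lie in \<open>m\<^sub>G\<close>, so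
  \<open>x\<^sup>N \<in> m\<^sub>G \<O>\<close>; polarisation with roots of unity extends this to every product of \<open>N\<close>
  elements of \<open>m\<close>. Hence \<open>m\<^sup>N\<^sup>s \<subseteq> m\<^sub>G\<^sup>s \<O>\<close>, and averaging over \<open>G\<close> (the Reynolds operator) gives
  \<open>\<O>\<^sup>G \<inter> m\<^sup>N\<^sup>s \<subseteq> m\<^sub>G\<^sup>s\<close>. Consequently \<open>ord \<phi> < N (ord\<^sub>G \<phi> + 1)\<close>, which is at most
  \<open>2N ord\<^sub>G \<phi>\<close> once \<open>\<phi>(0) = 0\<close>. Both orders are finite for \<open>\<phi> \<noteq> 0\<close>: on each complex line
  through \<open>0\<close> a germ in \<open>m\<^sup>s\<close> has a zero of order at least \<open>s\<close>, so a germ in every power of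
  \<open>m\<close> vanishes identically.
\<close>

section \<open>Holomorphic germs\<close>

definition holo_at :: "(complex^'n \<Rightarrow> complex) \<Rightarrow> complex^'n \<Rightarrow> bool" where
  "holo_at f z \<longleftrightarrow> (\<exists>L. (f has_derivative L) (at z) \<and> (\<forall>c v. L (c *s v) = c * L v))"

lemma holo_germ_iff_ball: "holo_germ f \<longleftrightarrow> (\<exists>r>0. \<forall>z\<in>ball 0 r. holo_at f z)"
  unfolding holo_germ_def holo_at_def ..

lemma holo_germ_iff_eventually: "holo_germ f \<longleftrightarrow> eventually (holo_at f) (nhds 0)"
  unfolding holo_germ_iff_ball eventually_nhds_metric by (auto simp: dist_commute)

lemma holo_at_const: "holo_at (\<lambda>_. c) z"
  unfolding holo_at_def by (rule exI[of _ "\<lambda>_. 0"]) auto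

lemma holo_at_add:
  assumes "holo_at f z" "holo_at g z"
  shows "holo_at (\<lambda>x. f x + g x) z"
proof -
  obtain L M where "(f has_derivative L) (at z)" "\<forall>c v. L (c *s v) = c * L v"
      "(g has_derivative M) (at z)" "\<forall>c v. M (c *s v) = c * M v"
    using assms unfolding holo_at_def by blast
  then show ?thesis unfolding holo_at_def
    by (intro exI[of _ "\<lambda>v. L v + M v"]) (auto intro: has_derivative_add simp: algebra_simps)
qed

lemma holo_at_mult:
  assumes "holo_at f z" "holo_at g z"
  shows "holo_at (\<lambda>x. f x * g x) z"
proof -
  obtain L M where "(f has_derivative L) (at z)" "\<forall>c v. L (c *s v) = c * L v"
      "(g has_derivative M) (at z)" "\<forall>c v. M (c *s v) = c * M v"
    using assms unfolding holo_at_def by blast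
  moreover from this have "((\<lambda>x. f x * g x) has_derivative (\<lambda>v. f z * M v + L v * g z)) (at z)"
    by (intro has_derivative_mult)
  ultimately show ?thesis unfolding holo_at_def by (auto simp: algebra_simps)
qed

lemma holo_at_linear_comp:
  assumes "holo_at f (A *v z)"
  shows "holo_at (\<lambda>x. f (A *v x)) z"
proof -
  obtain L where L: "(f has_derivative L) (at (A *v z))" "\<forall>c v. L (c *s v) = c * L v"
    using assms unfolding holo_at_def by blast
  have "((\<lambda>x. f (A *v x)) has_derivative (\<lambda>v. L (A *v v))) (at z)"
    using has_derivative_compose[OF bounded_linear_imp_has_derivative[OF matrix_vector_mul_bounded_linear] L(1)]
    by simp
  with L(2) show ?thesis unfolding holo_at_def by (auto simp: vector_scalar_commute)
qed

lemma holo_germ_const: "holo_germ (\<lambda>_. c)"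
  unfolding holo_germ_iff_eventually by (rule always_eventually) (simp add: holo_at_const)

lemma holo_germ_add: "holo_germ f \<Longrightarrow> holo_germ g \<Longrightarrow> holo_germ (\<lambda>x. f x + g x)"
  unfolding holo_germ_iff_eventually by (auto elim: eventually_elim2 intro: holo_at_add)

lemma holo_germ_mult: "holo_germ f \<Longrightarrow> holo_germ g \<Longrightarrow> holo_germ (\<lambda>x. f x * g x)"
  unfolding holo_germ_iff_eventually by (auto elim: eventually_elim2 intro: holo_at_mult)

lemma holo_germ_uminus: "holo_germ f \<Longrightarrow> holo_germ (\<lambda>x. - f x)"
  using holo_germ_mult[OF holo_germ_const[of "-1"]] by simp

lemma holo_germ_sum:
  "finite S \<Longrightarrow> (\<And>i. i \<in> S \<Longrightarrow> holo_germ (f i)) \<Longrightarrow> holo_germ (\<lambda>x. \<Sum>i\<in>S. f i x)"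
  by (induction S rule: finite_induct) (auto intro: holo_germ_add holo_germ_const)

lemma holo_germ_prod:
  "finite S \<Longrightarrow> (\<And>i. i \<in> S \<Longrightarrow> holo_germ (f i)) \<Longrightarrow> holo_germ (\<lambda>x. \<Prod>i\<in>S. f i x)"
  by (induction S rule: finite_induct) (auto intro: holo_germ_mult holo_germ_const)

lemma holo_germ_power: "holo_germ f \<Longrightarrow> holo_germ (\<lambda>x. f x ^ n)"
  by (induction n) (auto intro: holo_germ_mult holo_germ_const)

lemma eventually_nhds_0_bounded_linear:
  assumes "bounded_linear h" and "eventually P (nhds 0)"
  shows "eventually (\<lambda>x. P (h x)) (nhds 0)"
proof -
  have "(h \<longlongrightarrow> h 0) (nhds 0)"
    using bounded_linear.tendsto[OF assms(1) filterlim_ident] .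
  then have "filterlim h (nhds 0) (nhds 0)"
    by (simp add: linear_0[OF bounded_linear.linear[OF assms(1)]])
  with assms(2) show ?thesis by (simp add: filterlim_iff)
qed

lemma holo_germ_linear_comp: "holo_germ f \<Longrightarrow> holo_germ (\<lambda>x. f ((A::complex^'n^'n) *v x))"
  unfolding holo_germ_iff_eventually
  by (drule eventually_nhds_0_bounded_linear[rotated, where h="\<lambda>x. A *v x"])
     (auto elim: eventually_mono intro: holo_at_linear_comp)

lemma germ_eq_refl: "germ_eq f f"
  by (simp add: germ_eq_def)

lemma germ_eq_sym: "germ_eq f g \<Longrightarrow> germ_eq g f"
  by (simp add: germ_eq_def eq_commute)

lemma germ_eq_trans: "germ_eq f g \<Longrightarrow> germ_eq g h \<Longrightarrow> germ_eq f h"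
  unfolding germ_eq_def by (auto elim: eventually_elim2)

lemma germ_eq_add:
  "germ_eq f g \<Longrightarrow> germ_eq f' g' \<Longrightarrow> germ_eq (\<lambda>x. f x + f' x) (\<lambda>x. g x + g' x)"
  unfolding germ_eq_def by (auto elim: eventually_elim2)

lemma germ_eq_mult:
  "germ_eq f g \<Longrightarrow> germ_eq f' g' \<Longrightarrow> germ_eq (\<lambda>x. f x * f' x) (\<lambda>x. g x * g' x)"
  unfolding germ_eq_def by (auto elim: eventually_elim2)

lemma germ_eq_linear_comp:
  "germ_eq f g \<Longrightarrow> germ_eq (\<lambda>x. f ((A::complex^'n^'n) *v x)) (\<lambda>x. g (A *v x))"
  unfolding germ_eq_def by (rule eventually_nhds_0_bounded_linear) simp

lemma germ_eq_imp_eq_0: "germ_eq f g \<Longrightarrow> f 0 = g 0"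
  unfolding germ_eq_def by (auto simp: eventually_nhds)

lemma holo_germ_cong:
  assumes "holo_germ f" and "germ_eq f g"
  shows "holo_germ g"
proof -
  have "eventually (\<lambda>y. eventually (\<lambda>z. f z = g z) (nhds y)) (nhds 0)"
    using assms(2) by (simp add: germ_eq_def eventually_eventually)
  with assms(1) show ?thesis unfolding holo_germ_iff_eventually
  proof (rule eventually_elim2)
    fix y assume "holo_at f y" and eq: "eventually (\<lambda>z. f z = g z) (nhds y)"
    then obtain L where L: "(f has_derivative L) (at y)" "\<forall>c v. L (c *s v) = c * L v"
      unfolding holo_at_def by blast
    have "(g has_derivative L) (at y)"
      by (rule has_derivative_transform_eventually[OF L(1)])
         (use eq in \<open>auto simp: eventually_at_filter eventually_nhds elim: eventually_mono\<close>)
    with L(2) show "holo_at g y" unfolding holo_at_def by blast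
  qed
qed

section \<open>Roots of unity\<close>

lemma sum_root_unity_powers:
  fixes m e :: nat assumes m: "m \<ge> 1"
  defines "W \<equiv> \<lambda>p::nat. exp (2 * of_real pi * \<i> * of_nat p / of_nat m)"
  shows "(\<Sum>l<m. W (l * e)) = (if m dvd e then of_nat m else 0)"
proof -
  have Wl: "W (l * e) = W e ^ l" for l
    unfolding W_def by (simp add: exp_of_nat_mult[symmetric] mult_ac)
  have We: "W e = 1 \<longleftrightarrow> m dvd e"
    unfolding W_def by (rule complex_root_unity_eq_1[OF m])
  have Wm: "W e ^ m = 1"
    using complex_root_unity_eq_1[OF m, of "m * e"] Wl[of m] unfolding W_def by (simp add: mult_ac)
  show ?thesis
  proof (cases "m dvd e")
    case True
    then show ?thesis using We by (simp add: Wl)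
  next
    case False
    then have "W e \<noteq> 1" using We by simp
    with False show ?thesis by (simp add: Wl geometric_sum Wm)
  qed
qed

lemma root_unity_filter_linear_term:
  fixes a b :: complex and n :: nat assumes n: "n \<ge> 1"
  defines "W \<equiv> \<lambda>p::nat. exp (2 * of_real pi * \<i> * of_nat p / of_nat (Suc n))"
  shows "(\<Sum>l<Suc n. W (l * n) * (a + W l * b) ^ n) = of_nat (Suc n) * of_nat n * a ^ (n - 1) * b"
proof -
  have Wadd: "W p * W q = W (p + q)" for p q
    unfolding W_def by (simp add: exp_add[symmetric] add_divide_distrib distrib_left)
  have Wpow: "W l ^ j = W (l * j)" for l j
    unfolding W_def by (simp add: exp_of_nat_mult[symmetric] mult_ac)
  have dvd_iff: "Suc n dvd (n + j) \<longleftrightarrow> j = 1" if "j \<le> n" for j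
  proof
    assume "Suc n dvd (n + j)"
    then obtain k where k: "n + j = Suc n * k" by (auto elim: dvdE)
    with n \<open>j \<le> n\<close> show "j = 1" by (cases k; cases "k - 1") auto
  qed auto
  have "(\<Sum>l<Suc n. W (l * n) * (a + W l * b) ^ n)
      = (\<Sum>l<Suc n. \<Sum>j\<le>n. of_nat (n choose j) * b ^ j * a ^ (n - j) * W (l * (n + j)))"
  proof (rule sum.cong)
    fix l
    have "W (l * n) * (a + W l * b) ^ n
        = (\<Sum>j\<le>n. W (l * n) * (of_nat (n choose j) * (W (l * j) * b ^ j) * a ^ (n - j)))"
      by (subst add.commute, subst binomial_ring) (simp add: sum_distrib_left power_mult_distrib Wpow)
    also have "\<dots> = (\<Sum>j\<le>n. of_nat (n choose j) * b ^ j * a ^ (n - j) * W (l * (n + j)))"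
      by (rule sum.cong) (simp_all add: mult_ac Wadd distrib_left add.commute)
    finally show "W (l * n) * (a + W l * b) ^ n = \<dots>" .
  qed simp
  also have "\<dots> = (\<Sum>j\<le>n. of_nat (n choose j) * b ^ j * a ^ (n - j) * (\<Sum>l<Suc n. W (l * (n + j))))"
    by (subst sum.swap) (simp only: sum_distrib_left)
  also have "\<dots> = (\<Sum>j\<le>n. if j = 1 then of_nat (Suc n) * of_nat n * a ^ (n - 1) * b else 0)"
  proof (rule sum.cong)
    fix j assume "j \<in> {..n}"
    have "(\<Sum>l<Suc n. W (l * (n + j))) = (if Suc n dvd (n + j) then of_nat (Suc n) else 0)"
      unfolding W_def by (rule sum_root_unity_powers) simp
    with dvd_iff \<open>j \<in> {..n}\<close>
    show "of_nat (n choose j) * b ^ j * a ^ (n - j) * (\<Sum>l<Suc n. W (l * (n + j)))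
        = (if j = 1 then of_nat (Suc n) * of_nat n * a ^ (n - 1) * b else 0)"
      by auto
  qed simp
  also have "\<dots> = of_nat (Suc n) * of_nat n * a ^ (n - 1) * b"
    using n by (simp add: sum.delta)
  finally show ?thesis .
qed

section \<open>Ideals of germs\<close>

inductive_set germ_ideal :: "(complex^'n \<Rightarrow> complex) set \<Rightarrow> (complex^'n \<Rightarrow> complex) set"
  for A where
  zero: "(\<lambda>_. 0) \<in> germ_ideal A"
| gen: "a \<in> A \<Longrightarrow> holo_germ h \<Longrightarrow> (\<lambda>z. a z * h z) \<in> germ_ideal A"
| add: "f \<in> germ_ideal A \<Longrightarrow> g \<in> germ_ideal A \<Longrightarrow> (\<lambda>z. f z + g z) \<in> germ_ideal A"
| cong: "f \<in> germ_ideal A \<Longrightarrow> germ_eq g f \<Longrightarrow> g \<in> germ_ideal A"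

lemma germ_ideal_generator: "a \<in> A \<Longrightarrow> a \<in> germ_ideal A"
  using germ_ideal.gen[OF _ holo_germ_const[of 1]] by simp

lemma germ_ideal_mult_holo:
  "f \<in> germ_ideal A \<Longrightarrow> holo_germ k \<Longrightarrow> (\<lambda>z. f z * k z) \<in> germ_ideal A"
proof (induction f rule: germ_ideal.induct)
  case zero
  then show ?case by (simp add: germ_ideal.zero)
next
  case (gen a h)
  then have "(\<lambda>z. a z * (h z * k z)) \<in> germ_ideal A" by (intro germ_ideal.gen holo_germ_mult)
  then show ?case by (simp add: mult.assoc)
next
  case (add f g)
  then have "(\<lambda>z. f z * k z + g z * k z) \<in> germ_ideal A" by (intro germ_ideal.add)
  then show ?case by (simp add: distrib_right)
next
  case (cong f g)
  then show ?case by (blast intro: germ_ideal.cong germ_eq_mult germ_eq_refl)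
qed

lemma germ_ideal_cmult: "f \<in> germ_ideal A \<Longrightarrow> (\<lambda>z. c * f z) \<in> germ_ideal A"
  using germ_ideal_mult_holo[OF _ holo_germ_const[of c]] by (simp add: mult.commute)

lemma germ_ideal_sum:
  "(\<And>i. i < (n::nat) \<Longrightarrow> f i \<in> germ_ideal A) \<Longrightarrow> (\<lambda>z. \<Sum>i<n. f i z) \<in> germ_ideal A"
proof (induction n)
  case 0
  then show ?case by (simp add: germ_ideal.zero)
next
  case (Suc n)
  then have "(\<lambda>z. (\<Sum>i<n. f i z) + f n z) \<in> germ_ideal A" by (intro germ_ideal.add) auto
  then show ?case by simp
qed

lemma germ_ideal_mult_left:
  "f \<in> germ_ideal A \<Longrightarrow> (\<forall>q\<in>A. (\<lambda>z. a z * q z) \<in> germ_ideal B)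
    \<Longrightarrow> (\<lambda>z. a z * f z) \<in> germ_ideal B"
proof (induction f rule: germ_ideal.induct)
  case zero
  then show ?case by (simp add: germ_ideal.zero)
next
  case (gen q h)
  then have "(\<lambda>z. (a z * q z) * h z) \<in> germ_ideal B"
    by (intro germ_ideal_mult_holo[of "\<lambda>z. a z * q z"]) auto
  then show ?case by (simp add: mult.assoc)
next
  case (add f g)
  then have "(\<lambda>z. a z * f z + a z * g z) \<in> germ_ideal B" by (intro germ_ideal.add)
  then show ?case by (simp add: distrib_left)
next
  case (cong f g)
  then show ?case by (blast intro: germ_ideal.cong germ_eq_mult germ_eq_refl)
qed

lemma germ_ideal_mult:
  "f \<in> germ_ideal A \<Longrightarrow> g \<in> germ_ideal B \<Longrightarrow> (\<forall>a\<in>A. \<forall>b\<in>B. (\<lambda>z. a z * b z) \<in> germ_ideal C)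
    \<Longrightarrow> (\<lambda>z. f z * g z) \<in> germ_ideal C"
proof (induction f rule: germ_ideal.induct)
  case zero
  then show ?case by (simp add: germ_ideal.zero)
next
  case (gen a h)
  then have "(\<lambda>z. a z * g z) \<in> germ_ideal C" by (intro germ_ideal_mult_left[of g B]) auto
  then have "(\<lambda>z. a z * g z * h z) \<in> germ_ideal C" using gen(2) by (rule germ_ideal_mult_holo)
  then show ?case by (simp add: mult_ac)
next
  case (add f f')
  then have "(\<lambda>z. f z * g z + f' z * g z) \<in> germ_ideal C" by (intro germ_ideal.add)
  then show ?case by (simp add: distrib_right)
next
  case (cong f f')
  then show ?case by (blast intro: germ_ideal.cong germ_eq_mult germ_eq_refl)
qed

lemma germ_ideal_subset:
  assumes "A \<subseteq> germ_ideal B"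
  shows "germ_ideal A \<subseteq> germ_ideal B"
proof
  fix f assume "f \<in> germ_ideal A"
  then show "f \<in> germ_ideal B"
    by (induction f rule: germ_ideal.induct)
       (use assms in \<open>auto intro: germ_ideal.zero germ_ideal.add germ_ideal.cong germ_ideal_mult_holo\<close>)
qed

lemma holo_germ_germ_ideal: "f \<in> germ_ideal A \<Longrightarrow> \<forall>a\<in>A. holo_germ a \<Longrightarrow> holo_germ f"
  by (induction f rule: germ_ideal.induct)
     (auto intro: holo_germ_const holo_germ_mult holo_germ_add holo_germ_cong germ_eq_sym)

section \<open>Powers of the maximal ideal\<close>

lemma ideal_pow_Suc_iff:
  "f \<in> ideal_pow R (Suc s) \<longleftrightarrow> f \<in> R \<and> (\<exists>(n::nat) a b. (\<forall>i<n. a i \<in> max_ideal R \<and> b i \<in> ideal_pow R s)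
      \<and> germ_eq f (\<lambda>z. \<Sum>i<n. a i z * b i z))"
  by (simp only: ideal_pow.simps mem_Collect_eq)

lemma ideal_pow_Suc_subset: "ideal_pow R (Suc s) \<subseteq> ideal_pow R s"
proof (induction s)
  case 0
  then show ?case by (auto simp: ideal_pow_Suc_iff)
next
  case (Suc s)
  show ?case
  proof
    fix f assume "f \<in> ideal_pow R (Suc (Suc s))"
    with Suc show "f \<in> ideal_pow R (Suc s)"
      unfolding ideal_pow_Suc_iff[of f R "Suc s"] ideal_pow_Suc_iff[of f R s] by blast
  qed
qed

lemma ideal_pow_antimono: "s \<le> t \<Longrightarrow> ideal_pow R t \<subseteq> ideal_pow R s"
  by (induction t rule: dec_induct) (use ideal_pow_Suc_subset in blast)+

lemma ideal_pow_mono: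
  assumes "R \<subseteq> R'"
  shows "ideal_pow R s \<subseteq> ideal_pow R' s"
proof (induction s)
  case 0
  then show ?case using assms by simp
next
  case (Suc s)
  have "max_ideal R \<subseteq> max_ideal R'"
    using assms unfolding max_ideal_def by auto
  show ?case
  proof
    fix f assume "f \<in> ideal_pow R (Suc s)"
    with Suc assms \<open>max_ideal R \<subseteq> max_ideal R'\<close> show "f \<in> ideal_pow R' (Suc s)"
      unfolding ideal_pow_Suc_iff by blast
  qed
qed

lemma zero_in_ideal_pow: "(\<lambda>_. 0) \<in> R \<Longrightarrow> (\<lambda>_. 0) \<in> ideal_pow R s"
  by (cases s) (auto simp: ideal_pow_Suc_iff germ_eq_refl intro!: exI[of _ "0::nat"])

lemma ideal_pow_cong: "f \<in> R \<Longrightarrow> germ_eq f g \<Longrightarrow> g \<in> ideal_pow R s \<Longrightarrow> f \<in> ideal_pow R s"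
  by (cases s) (auto simp: ideal_pow_Suc_iff intro: germ_eq_trans)

lemma ideal_pow_add:
  assumes R: "\<forall>f\<in>R. \<forall>g\<in>R. (\<lambda>z. f z + g z) \<in> R"
    and f: "f \<in> ideal_pow R s" and g: "g \<in> ideal_pow R s"
  shows "(\<lambda>z. f z + g z) \<in> ideal_pow R s"
proof (cases s)
  case 0
  then show ?thesis using assms by simp
next
  case (Suc t)
  from f Suc obtain n1 :: nat and a1 b1 where 1: "f \<in> R" "\<forall>i<n1. a1 i \<in> max_ideal R \<and> b1 i \<in> ideal_pow R t"
    "germ_eq f (\<lambda>z. \<Sum>i<n1. a1 i z * b1 i z)" by (auto simp: ideal_pow_Suc_iff)
  from g Suc obtain n2 :: nat and a2 b2 where 2: "g \<in> R" "\<forall>i<n2. a2 i \<in> max_ideal R \<and> b2 i \<in> ideal_pow R t"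
    "germ_eq g (\<lambda>z. \<Sum>i<n2. a2 i z * b2 i z)" by (auto simp: ideal_pow_Suc_iff)
  define a where "a i = (if i < n1 then a1 i else a2 (i - n1))" for i
  define b where "b i = (if i < n1 then b1 i else b2 (i - n1))" for i
  have concat: "(\<Sum>i<n1 + m. a i z * b i z) = (\<Sum>i<n1. a1 i z * b1 i z) + (\<Sum>i<m. a2 i z * b2 i z)"
    for z m by (induction m) (auto simp: a_def b_def)
  have "germ_eq (\<lambda>z. f z + g z) (\<lambda>z. \<Sum>i<n1 + n2. a i z * b i z)"
    unfolding concat by (rule germ_eq_add[OF 1(3) 2(3)])
  moreover have "\<forall>i<n1 + n2. a i \<in> max_ideal R \<and> b i \<in> ideal_pow R t"
    using 1(2) 2(2) unfolding a_def b_def by auto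
  moreover have "(\<lambda>z. f z + g z) \<in> R" using R 1(1) 2(1) by blast
  ultimately show ?thesis unfolding Suc ideal_pow_Suc_iff by blast
qed

lemma ideal_pow_Suc_vanishes: "f \<in> ideal_pow R (Suc s) \<Longrightarrow> f 0 = 0"
  by (auto simp: ideal_pow_Suc_iff max_ideal_def dest!: germ_eq_imp_eq_0 intro!: sum.neutral)

lemma max_ideal_subset_ideal_pow_1:
  assumes "(\<lambda>_. 1) \<in> R"
  shows "max_ideal R \<subseteq> ideal_pow R 1"
proof
  fix f assume f: "f \<in> max_ideal R"
  have "germ_eq f (\<lambda>z. \<Sum>i<(1::nat). (\<lambda>_. f) i z * (\<lambda>_ _. 1) i z)"
    by (simp add: germ_eq_refl)
  with f assms show "f \<in> ideal_pow R 1"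
    unfolding One_nat_def ideal_pow_Suc_iff
    by (intro conjI exI[of _ "1::nat"] exI[of _ "\<lambda>_. f"] exI[of _ "\<lambda>_ _. 1"]) (auto simp: max_ideal_def)
qed

lemma germ_ord_attained:
  assumes "f \<in> R" and "\<forall>s. f \<in> ideal_pow R s \<longrightarrow> s \<le> B"
  shows "f \<in> ideal_pow R (germ_ord R f)"
  unfolding germ_ord_def by (rule GreatestI_nat[of _ 0 B]) (use assms in auto)

lemma germ_ord_greatest:
  assumes "f \<in> ideal_pow R s" and "\<forall>s. f \<in> ideal_pow R s \<longrightarrow> s \<le> B"
  shows "s \<le> germ_ord R f"
  unfolding germ_ord_def by (rule Greatest_le_nat[of _ s B]) (use assms in auto)

lemma germ_ord_mono:
  assumes "R \<subseteq> R'" "f \<in> R" and "\<forall>s. f \<in> ideal_pow R' s \<longrightarrow> s \<le> B"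
  shows "germ_ord R f \<le> germ_ord R' f"
proof -
  have bound: "\<forall>s. f \<in> ideal_pow R s \<longrightarrow> s \<le> B"
    using assms(3) ideal_pow_mono[OF assms(1)] by blast
  show ?thesis
    using germ_ord_attained[OF assms(2) bound] ideal_pow_mono[OF assms(1)]
    by (intro germ_ord_greatest[OF _ assms(3)]) blast
qed

section \<open>Invariant germs\<close>

abbreviation holo_germs :: "(complex^'n \<Rightarrow> complex) set" where
  "holo_germs \<equiv> inv_germs {mat 1}"

lemma holo_germs_eq: "holo_germs = {f. holo_germ f}"
  by (auto simp: inv_germs_def)

lemma max_ideal_holo_germs_iff: "a \<in> max_ideal holo_germs \<longleftrightarrow> holo_germ a \<and> a 0 = 0"
  by (simp add: max_ideal_def holo_germs_eq)

lemma inv_germs_antimono: "H \<subseteq> G \<Longrightarrow> inv_germs G \<subseteq> inv_germs H"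
  by (auto simp: inv_germs_def)

lemma holo_germ_inv_germs: "f \<in> inv_germs G \<Longrightarrow> holo_germ f"
  by (simp add: inv_germs_def)

lemma const_in_inv_germs: "(\<lambda>_. c) \<in> inv_germs G"
  by (simp add: inv_germs_def holo_germ_const)

lemma inv_germs_binop:
  assumes f: "f \<in> inv_germs G" and g: "g \<in> inv_germs G" and "holo_germ (\<lambda>z. F (f z) (g z))"
  shows "(\<lambda>z. F (f z) (g z)) \<in> inv_germs G"
  unfolding inv_germs_def
proof (intro CollectI conjI ballI)
  fix h assume "h \<in> G"
  with f g have "eventually (\<lambda>z. f (h *v z) = f z) (nhds 0)" "eventually (\<lambda>z. g (h *v z) = g z) (nhds 0)"
    unfolding inv_germs_def by auto
  then show "eventually (\<lambda>z. F (f (h *v z)) (g (h *v z)) = F (f z) (g z)) (nhds 0)"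
    by (rule eventually_elim2) simp
qed (rule assms(3))

lemma inv_germs_add: "f \<in> inv_germs G \<Longrightarrow> g \<in> inv_germs G \<Longrightarrow> (\<lambda>z. f z + g z) \<in> inv_germs G"
  by (rule inv_germs_binop[where F="(+)"]) (auto intro: holo_germ_add holo_germ_inv_germs)

lemma inv_germs_mult: "f \<in> inv_germs G \<Longrightarrow> g \<in> inv_germs G \<Longrightarrow> (\<lambda>z. f z * g z) \<in> inv_germs G"
  by (rule inv_germs_binop[where F="(*)"]) (auto intro: holo_germ_mult holo_germ_inv_germs)

fun max_ideal_prods :: "(complex^'n \<Rightarrow> complex) set \<Rightarrow> nat \<Rightarrow> (complex^'n \<Rightarrow> complex) set" where
  "max_ideal_prods R 0 = {\<lambda>_. 1}"
| "max_ideal_prods R (Suc k) = {\<lambda>z. a z * q z | a q. a \<in> max_ideal R \<and> q \<in> max_ideal_prods R k}"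

lemma max_ideal_prods_add:
  "q \<in> max_ideal_prods R (k + l)
    \<Longrightarrow> \<exists>q1\<in>max_ideal_prods R k. \<exists>q2\<in>max_ideal_prods R l. q = (\<lambda>z. q1 z * q2 z)"
proof (induction k arbitrary: q)
  case 0
  then show ?case by auto
next
  case (Suc k)
  then obtain x q' where x: "x \<in> max_ideal R" "q' \<in> max_ideal_prods R (k + l)"
    and q: "q = (\<lambda>z. x z * q' z)" by auto
  from Suc.IH[OF x(2)] obtain q1 q2 where
    q12: "q1 \<in> max_ideal_prods R k" "q2 \<in> max_ideal_prods R l" "q' = (\<lambda>z. q1 z * q2 z)" by blast
  show ?case
  proof (rule bexI[of _ "\<lambda>z. x z * q1 z"])
    show "\<exists>q2\<in>max_ideal_prods R l. q = (\<lambda>z. x z * q1 z * q2 z)"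
      using q12(2) unfolding q q12(3) by (intro bexI[of _ q2]) (simp_all add: mult.assoc)
    show "(\<lambda>z. x z * q1 z) \<in> max_ideal_prods R (Suc k)" using x(1) q12(1) by auto
  qed
qed

lemma ideal_pow_subset_germ_ideal_prods:
  assumes "\<forall>f\<in>R. holo_germ f"
  shows "f \<in> ideal_pow R m \<Longrightarrow> f \<in> germ_ideal (max_ideal_prods R m)"
proof (induction m arbitrary: f)
  case 0
  with assms have "(\<lambda>z. (\<lambda>_. 1) z * f z) \<in> germ_ideal (max_ideal_prods R 0)"
    by (intro germ_ideal.gen) auto
  then show ?case by simp
next
  case (Suc m)
  then obtain n :: nat and a b where ab: "\<forall>i<n. a i \<in> max_ideal R \<and> b i \<in> ideal_pow R m"
    "germ_eq f (\<lambda>z. \<Sum>i<n. a i z * b i z)" by (auto simp: ideal_pow_Suc_iff)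
  have "(\<lambda>z. a i z * b i z) \<in> germ_ideal (max_ideal_prods R (Suc m))" if "i < n" for i
  proof (rule germ_ideal_mult_left)
    show "b i \<in> germ_ideal (max_ideal_prods R m)" using Suc.IH ab(1) that by blast
    show "\<forall>q\<in>max_ideal_prods R m. (\<lambda>z. a i z * q z) \<in> germ_ideal (max_ideal_prods R (Suc m))"
      using ab(1) that by (auto intro!: germ_ideal_generator)
  qed
  then have "(\<lambda>z. \<Sum>i<n. a i z * b i z) \<in> germ_ideal (max_ideal_prods R (Suc m))"
    by (rule germ_ideal_sum)
  then show ?case using ab(2) by (rule germ_ideal.cong)
qed

lemma max_ideal_prods_subset_inv_germs: "max_ideal_prods (inv_germs G) s \<subseteq> inv_germs G"
  by (induction s) (auto simp: max_ideal_def const_in_inv_germs intro: inv_germs_mult)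

lemma max_ideal_prods_mult_in_ideal_pow:
  "p \<in> max_ideal_prods (inv_germs G) s \<Longrightarrow> r \<in> inv_germs G
    \<Longrightarrow> (\<lambda>z. p z * r z) \<in> ideal_pow (inv_germs G) s"
proof (induction s arbitrary: p r)
  case 0
  then show ?case by (auto intro: inv_germs_mult const_in_inv_germs)
next
  case (Suc s)
  then obtain c q where c: "c \<in> max_ideal (inv_germs G)" and q: "q \<in> max_ideal_prods (inv_germs G) s"
    and p: "p = (\<lambda>z. c z * q z)" by auto
  have "(\<lambda>z. p z * r z) \<in> inv_germs G"
    using Suc.prems max_ideal_prods_subset_inv_germs by (blast intro: inv_germs_mult)
  moreover have "germ_eq (\<lambda>z. p z * r z) (\<lambda>z. \<Sum>i<(1::nat). (\<lambda>_. c) i z * (\<lambda>_ z. q z * r z) i z)"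
    unfolding p by (simp add: mult.assoc germ_eq_refl)
  moreover have "(\<lambda>z. q z * r z) \<in> ideal_pow (inv_germs G) s"
    using Suc.IH q Suc.prems(2) by blast
  ultimately show ?case unfolding ideal_pow_Suc_iff using c
    by (intro conjI exI[of _ "1::nat"] exI[of _ "\<lambda>_. c"] exI[of _ "\<lambda>_ z. q z * r z"]) auto
qed

section \<open>Nonzero germs have finite order\<close>

lemma norm_vector_smult: "norm (c *s (x::complex^'n)) = norm c * norm x"
  unfolding norm_vec_def by (simp add: norm_mult L2_set_right_distrib)

lemma bounded_linear_vector_smult_left: "bounded_linear (\<lambda>t::complex. t *s (v::complex^'n))"
proof (rule bounded_linear_intro[where K="norm v"])
  fix x y :: complex
  show "(x + y) *s v = x *s v + y *s v" by (rule vector_sadd_rdistrib)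
next
  fix r :: real and x :: complex
  show "(r *\<^sub>R x) *s v = r *\<^sub>R (x *s v)" by (simp add: vec_eq_iff mult_scaleR_left)
next
  fix x :: complex
  show "norm (x *s v) \<le> norm x * norm v" by (simp add: norm_vector_smult)
qed

lemma field_differentiable_line:
  assumes "holo_at f (t *s v)"
  shows "(\<lambda>t. f (t *s v)) field_differentiable (at t)"
proof -
  obtain L where L: "(f has_derivative L) (at (t *s v))" "\<forall>c w. L (c *s w) = c * L w"
    using assms unfolding holo_at_def by blast
  have "((\<lambda>t. f (t *s v)) has_derivative (\<lambda>h. L (h *s v))) (at t)"
    using has_derivative_compose[OF bounded_linear_imp_has_derivative[OF bounded_linear_vector_smult_left] L(1)]
    by simp
  moreover have "(\<lambda>h. L (h *s v)) = (*) (L v)"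
    using L(2) by (auto simp: mult.commute)
  ultimately show ?thesis
    unfolding field_differentiable_def has_field_derivative_def by auto
qed

lemma holomorphic_on_line:
  assumes f: "\<forall>z\<in>ball 0 r. holo_at f z" and "0 < r" and "\<rho> * norm v \<le> r"
  shows "(\<lambda>t. f (t *s v)) holomorphic_on ball 0 \<rho>"
  unfolding holomorphic_on_def
proof
  fix t :: complex assume "t \<in> ball 0 \<rho>"
  then have "norm t < \<rho>" by simp
  have "norm t * norm v < r"
  proof (cases "norm v = 0")
    case False
    then have "norm t * norm v < \<rho> * norm v" using \<open>norm t < \<rho>\<close> by simp
    with assms(3) show ?thesis by linarith
  qed (simp add: \<open>0 < r\<close>)
  with f have "holo_at f (t *s v)" by (simp add: norm_vector_smult)
  then show "(\<lambda>t. f (t *s v)) field_differentiable (at t within ball 0 \<rho>)"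
    using field_differentiable_line field_differentiable_at_within by blast
qed

lemma holo_germ_holomorphic_on_line:
  assumes "holo_germ f"
  obtains \<rho> where "0 < \<rho>" "(\<lambda>t. f (t *s v)) holomorphic_on ball 0 \<rho>"
proof -
  obtain r where r: "0 < r" "\<forall>z\<in>ball 0 r. holo_at f z"
    using assms holo_germ_iff_ball by blast
  have pos: "0 < norm v + 1" by (simp add: add_nonneg_pos)
  have "r / (norm v + 1) * norm v \<le> r"
    using pos r(1) by (simp add: field_simps)
  with r have "(\<lambda>t. f (t *s v)) holomorphic_on ball 0 (r / (norm v + 1))"
    by (intro holomorphic_on_line)
  moreover have "0 < r / (norm v + 1)" using pos r(1) by simp
  ultimately show ?thesis by (rule that[rotated])
qed

definition vanishes_to_order :: "nat \<Rightarrow> (complex \<Rightarrow> complex) \<Rightarrow> bool" where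
  "vanishes_to_order s F \<longleftrightarrow>
     (\<exists>r>0. \<exists>h. h holomorphic_on ball 0 r \<and> (\<forall>t\<in>ball 0 r. F t = t ^ s * h t))"

lemma vanishes_to_order_0: "F holomorphic_on ball 0 r \<Longrightarrow> 0 < r \<Longrightarrow> vanishes_to_order 0 F"
  unfolding vanishes_to_order_def by auto

lemma vanishes_to_order_1:
  assumes "F holomorphic_on ball 0 r" "0 < r" "F 0 = 0"
  shows "vanishes_to_order 1 F"
proof -
  let ?h = "\<lambda>z. if z = 0 then deriv F 0 else (F z - F 0) / (z - 0)"
  have "?h holomorphic_on ball 0 r" using assms by (intro pole_lemma) auto
  moreover have "\<forall>t\<in>ball 0 r. F t = t ^ 1 * ?h t" using assms(3) by auto
  ultimately show ?thesis unfolding vanishes_to_order_def using assms(2) by blast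
qed

lemma vanishes_to_order_mult:
  assumes "vanishes_to_order a F" "vanishes_to_order b H"
  shows "vanishes_to_order (a + b) (\<lambda>t. F t * H t)"
proof -
  obtain r1 h1 r2 h2 where 1: "r1 > 0" "h1 holomorphic_on ball 0 r1" "\<forall>t\<in>ball 0 r1. F t = t ^ a * h1 t"
    and 2: "r2 > 0" "h2 holomorphic_on ball 0 r2" "\<forall>t\<in>ball 0 r2. H t = t ^ b * h2 t"
    using assms unfolding vanishes_to_order_def by blast
  have "(\<lambda>t. h1 t * h2 t) holomorphic_on ball 0 (min r1 r2)"
    by (intro holomorphic_on_mult holomorphic_on_subset[OF 1(2)] holomorphic_on_subset[OF 2(2)]) auto
  moreover have "\<forall>t\<in>ball 0 (min r1 r2). F t * H t = t ^ (a + b) * (h1 t * h2 t)"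
    using 1(3) 2(3) by (auto simp: power_add)
  ultimately show ?thesis unfolding vanishes_to_order_def using 1(1) 2(1) by (intro exI[of _ "min r1 r2"]) auto
qed

lemma vanishes_to_order_add:
  assumes "vanishes_to_order s F" "vanishes_to_order s H"
  shows "vanishes_to_order s (\<lambda>t. F t + H t)"
proof -
  obtain r1 h1 r2 h2 where 1: "r1 > 0" "h1 holomorphic_on ball 0 r1" "\<forall>t\<in>ball 0 r1. F t = t ^ s * h1 t"
    and 2: "r2 > 0" "h2 holomorphic_on ball 0 r2" "\<forall>t\<in>ball 0 r2. H t = t ^ s * h2 t"
    using assms unfolding vanishes_to_order_def by blast
  have "(\<lambda>t. h1 t + h2 t) holomorphic_on ball 0 (min r1 r2)"
    by (intro holomorphic_on_add holomorphic_on_subset[OF 1(2)] holomorphic_on_subset[OF 2(2)]) auto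
  moreover have "\<forall>t\<in>ball 0 (min r1 r2). F t + H t = t ^ s * (h1 t + h2 t)"
    using 1(3) 2(3) by (auto simp: distrib_left)
  ultimately show ?thesis unfolding vanishes_to_order_def using 1(1) 2(1) by (intro exI[of _ "min r1 r2"]) auto
qed

lemma vanishes_to_order_sum:
  "(\<And>i. i < (n::nat) \<Longrightarrow> vanishes_to_order s (F i)) \<Longrightarrow> vanishes_to_order s (\<lambda>t. \<Sum>i<n. F i t)"
proof (induction n)
  case 0
  have "vanishes_to_order s (\<lambda>_. 0)"
    unfolding vanishes_to_order_def by (rule exI[of _ 1]) (auto intro!: exI[of _ "\<lambda>_. 0"])
  then show ?case by simp
next
  case (Suc n)
  then have "vanishes_to_order s (\<lambda>t. (\<Sum>i<n. F i t) + F n t)" by (intro vanishes_to_order_add) auto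
  then show ?case by simp
qed

lemma vanishes_to_order_cong:
  assumes "vanishes_to_order s F" and "eventually (\<lambda>t. H t = F t) (nhds 0)"
  shows "vanishes_to_order s H"
proof -
  obtain r h e where 1: "r > 0" "h holomorphic_on ball 0 r" "\<forall>t\<in>ball 0 r. F t = t ^ s * h t"
    and e: "e > 0" "\<forall>t. dist t 0 < e \<longrightarrow> H t = F t"
    using assms unfolding vanishes_to_order_def eventually_nhds_metric by blast
  have "h holomorphic_on ball 0 (min r e)" by (rule holomorphic_on_subset[OF 1(2)]) auto
  moreover have "\<forall>t\<in>ball 0 (min r e). H t = t ^ s * h t" using 1(3) e(2) by (auto simp: dist_commute)
  ultimately show ?thesis unfolding vanishes_to_order_def using 1(1) e(1) by (intro exI[of _ "min r e"]) auto
qed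

lemma ideal_pow_imp_vanishes_on_line:
  "f \<in> ideal_pow holo_germs s \<Longrightarrow> vanishes_to_order s (\<lambda>t. f (t *s v))"
proof (induction s arbitrary: f)
  case 0
  then have "holo_germ f" by (simp add: holo_germs_eq)
  then obtain \<rho> where "0 < \<rho>" "(\<lambda>t. f (t *s v)) holomorphic_on ball 0 \<rho>"
    by (rule holo_germ_holomorphic_on_line)
  then show ?case by (rule vanishes_to_order_0[rotated])
next
  case (Suc s)
  then obtain n :: nat and a b where ab: "\<forall>i<n. a i \<in> max_ideal holo_germs \<and> b i \<in> ideal_pow holo_germs s"
    "germ_eq f (\<lambda>z. \<Sum>i<n. a i z * b i z)" by (auto simp: ideal_pow_Suc_iff)
  have "vanishes_to_order 1 (\<lambda>t. a i (t *s v))" if "i < n" for i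
  proof -
    have "holo_germ (a i)" "a i 0 = 0" using ab(1) that by (auto simp: max_ideal_holo_germs_iff)
    then show ?thesis
      using holo_germ_holomorphic_on_line vanishes_to_order_1 by (metis vector_smult_lzero)
  qed
  then have "vanishes_to_order (1 + s) (\<lambda>t. a i (t *s v) * b i (t *s v))" if "i < n" for i
    using ab(1) that Suc.IH by (intro vanishes_to_order_mult) auto
  then have "vanishes_to_order (Suc s) (\<lambda>t. \<Sum>i<n. a i (t *s v) * b i (t *s v))"
    by (intro vanishes_to_order_sum) auto
  moreover have "eventually (\<lambda>t. f (t *s v) = (\<Sum>i<n. a i (t *s v) * b i (t *s v))) (nhds 0)"
    using eventually_nhds_0_bounded_linear[OF bounded_linear_vector_smult_left ab(2)[unfolded germ_eq_def]]
    by simp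
  ultimately show ?case by (rule vanishes_to_order_cong)
qed

lemma vanishes_to_all_orders_imp_zero:
  assumes F: "F holomorphic_on ball 0 r" and vanishes: "\<And>s. vanishes_to_order s F"
    and w: "w \<in> ball 0 r"
  shows "F w = 0"
proof (rule ccontr)
  assume "F w \<noteq> 0"
  from w have "0 < r" by (metis mem_ball_0 norm_ge_zero le_less_trans)
  have F0: "F 0 = 0" using vanishes[of 1] unfolding vanishes_to_order_def by force
  with w \<open>F w \<noteq> 0\<close> \<open>0 < r\<close> have "\<not> F constant_on ball 0 r"
    unfolding constant_on_def by (metis centre_in_ball)
  then obtain g \<rho> n where g: "0 < \<rho>" "g holomorphic_on ball 0 \<rho>"
    "\<And>t. t \<in> ball 0 \<rho> \<Longrightarrow> F t = t ^ n * g t" "\<And>t. t \<in> ball 0 \<rho> \<Longrightarrow> g t \<noteq> 0"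
    using holomorphic_factor_zero_nonconstant[OF F open_ball connected_ball _ F0] \<open>0 < r\<close>
    by (metis centre_in_ball diff_zero)
  obtain r' h where h: "0 < r'" "h holomorphic_on ball 0 r'" "\<forall>t\<in>ball 0 r'. F t = t ^ Suc n * h t"
    using vanishes[of "Suc n"] unfolding vanishes_to_order_def by blast
  text \<open>Comparing the two factorisations of \<open>F\<close> forces \<open>g 0 = 0\<close>.\<close>
  have "t * h t = g t" if "t \<noteq> 0" "dist t 0 < min \<rho> r'" for t
  proof -
    have "t \<in> ball 0 \<rho>" "t \<in> ball 0 r'" using that(2) by (auto simp: dist_commute)
    then have "t ^ n * g t = F t" using g(3) by simp
    also have "\<dots> = t ^ n * (t * h t)"
      using h(3) \<open>t \<in> ball 0 r'\<close> by (simp add: mult_ac)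
    finally have "t ^ n * g t = t ^ n * (t * h t)" .
    with that(1) show ?thesis by simp
  qed
  then have ev: "eventually (\<lambda>t. t * h t = g t) (at 0)"
    unfolding eventually_at using g(1) h(1) by (intro exI[of _ "min \<rho> r'"]) auto
  have "isCont h 0" "isCont g 0"
    using holomorphic_on_imp_continuous_on[OF h(2)] holomorphic_on_imp_continuous_on[OF g(2)] h(1) g(1)
    by (simp_all add: continuous_on_eq_continuous_at)
  then have "((\<lambda>t. t * h t) \<longlongrightarrow> 0) (at 0)" "(g \<longlongrightarrow> g 0) (at 0)"
    by (auto intro!: tendsto_eq_intros simp: isCont_def)
  with ev have "(g \<longlongrightarrow> 0) (at 0)" "(g \<longlongrightarrow> g 0) (at 0)"
    by (simp_all add: tendsto_cong)
  then have "0 = g 0" by (rule tendsto_unique[OF at_neq_bot])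
  with g(1,4) show False by simp
qed

lemma ideal_pow_holo_germs_bounded:
  assumes "holo_germ \<phi>" and "\<not> germ_eq \<phi> (\<lambda>_. 0)"
  obtains B where "\<forall>s. \<phi> \<in> ideal_pow holo_germs s \<longrightarrow> s \<le> B"
proof -
  obtain r where r: "0 < r" "\<forall>z\<in>ball 0 r. holo_at \<phi> z"
    using assms(1) holo_germ_iff_ball by blast
  have "\<exists>B. \<phi> \<notin> ideal_pow holo_germs B"
  proof (rule ccontr)
    assume "\<nexists>B. \<phi> \<notin> ideal_pow holo_germs B"
    then have all: "\<phi> \<in> ideal_pow holo_germs s" for s by blast
    have "\<phi> z = 0" if z: "z \<in> ball 0 r" for z
    proof (cases "z = 0")
      case True
      then show ?thesis using all[of 1] ideal_pow_Suc_vanishes by (metis One_nat_def)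
    next
      case False
      then have "(\<lambda>t. \<phi> (t *s z)) holomorphic_on ball 0 (r / norm z)"
        using r by (intro holomorphic_on_line) auto
      moreover have "1 \<in> ball (0::complex) (r / norm z)"
        using z False by (simp add: field_simps)
      ultimately have "\<phi> (1 *s z) = 0"
        by (rule vanishes_to_all_orders_imp_zero[OF _ ideal_pow_imp_vanishes_on_line[OF all]])
      then show ?thesis by simp
    qed
    then have "germ_eq \<phi> (\<lambda>_. 0)"
      unfolding germ_eq_def eventually_nhds_metric using r(1) by (auto simp: dist_commute)
    with assms(2) show False ..
  qed
  then obtain B where "\<phi> \<notin> ideal_pow holo_germs B" by blast
  then have "\<forall>s. \<phi> \<in> ideal_pow holo_germs s \<longrightarrow> s \<le> B"
    using ideal_pow_antimono by (meson nat_le_linear subsetD)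
  then show ?thesis by (rule that)
qed

lemma germ_ord_inv_germs_le:
  assumes "mat 1 \<in> G" and "\<phi> \<in> inv_germs G" and "\<not> germ_eq \<phi> (\<lambda>_. 0)"
  shows "germ_ord (inv_germs G) \<phi> \<le> germ_ord holo_germs \<phi>"
proof -
  obtain B where "\<forall>s. \<phi> \<in> ideal_pow holo_germs s \<longrightarrow> s \<le> B"
    using ideal_pow_holo_germs_bounded holo_germ_inv_germs assms(2,3) by blast
  moreover have "inv_germs G \<subseteq> holo_germs"
    using assms(1) by (intro inv_germs_antimono) simp
  ultimately show ?thesis using assms(2) by (intro germ_ord_mono)
qed

section \<open>Finite matrix groups and the Reynolds operator\<close>

locale finite_matrix_group =
  fixes G :: "(complex^'n^'n) set"
  assumes finite_G: "finite G" and one_in_G: "mat 1 \<in> G"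
    and mult_closed: "\<forall>g\<in>G. \<forall>h\<in>G. g ** h \<in> G" and invertible: "\<forall>g\<in>G. invertible g"
begin

lemma card_G_pos: "0 < card G"
  using finite_G one_in_G card_gt_0_iff by blast

lemma inj_on_mult_right: "h \<in> G \<Longrightarrow> inj_on (\<lambda>g. g ** h) X"
proof (rule inj_onI)
  fix x y assume "h \<in> G" "x ** h = y ** h"
  moreover obtain h' where "h ** h' = mat 1" using invertible \<open>h \<in> G\<close> unfolding invertible_def by blast
  ultimately show "x = y" by (metis matrix_mul_assoc matrix_mul_rid)
qed

lemma bij_betw_mult_right: "h \<in> G \<Longrightarrow> bij_betw (\<lambda>g. g ** h) G G"
  using endo_inj_surj[OF finite_G _ inj_on_mult_right] mult_closed
  by (auto simp: bij_betw_def inj_on_mult_right)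

definition reynolds :: "(complex^'n \<Rightarrow> complex) \<Rightarrow> complex^'n \<Rightarrow> complex" where
  "reynolds f z = (\<Sum>g\<in>G. f (g *v z)) / of_nat (card G)"

lemma reynolds_invariant: "h \<in> G \<Longrightarrow> reynolds f (h *v z) = reynolds f z"
proof -
  assume h: "h \<in> G"
  have "(\<Sum>g\<in>G. f (g *v (h *v z))) = (\<Sum>g\<in>G. f ((g ** h) *v z))"
    by (simp add: matrix_vector_mul_assoc)
  also have "\<dots> = (\<Sum>g\<in>G. f (g *v z))"
    by (rule sum.reindex_bij_betw[OF bij_betw_mult_right[OF h], of "\<lambda>g. f (g *v z)"])
  finally show ?thesis unfolding reynolds_def by simp
qed

lemma reynolds_in_inv_germs: "holo_germ f \<Longrightarrow> reynolds f \<in> inv_germs G"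
proof -
  assume "holo_germ f"
  then have "holo_germ (\<lambda>z. (\<Sum>g\<in>G. f (g *v z)) * inverse (of_nat (card G)))"
    by (intro holo_germ_mult holo_germ_const holo_germ_sum[OF finite_G] holo_germ_linear_comp)
  then have "holo_germ (reynolds f)"
    by (simp add: reynolds_def[abs_def] divide_inverse)
  then show ?thesis
    unfolding inv_germs_def using reynolds_invariant by simp
qed

lemma inv_germs_eventually_invariant:
  "f \<in> inv_germs G \<Longrightarrow> eventually (\<lambda>z. \<forall>g\<in>G. f (g *v z) = f z) (nhds 0)"
  using finite_G unfolding inv_germs_def by (simp add: eventually_ball_finite_distrib)

lemma germ_eq_reynolds: "f \<in> inv_germs G \<Longrightarrow> germ_eq f (reynolds f)"
  unfolding germ_eq_def reynolds_def using card_G_pos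
  by (auto elim!: eventually_mono[OF inv_germs_eventually_invariant])

lemma reynolds_add: "reynolds (\<lambda>z. f z + g z) = (\<lambda>z. reynolds f z + reynolds g z)"
  unfolding reynolds_def by (simp add: sum.distrib add_divide_distrib fun_eq_iff)

lemma reynolds_zero: "reynolds (\<lambda>_. 0) = (\<lambda>_. 0)"
  unfolding reynolds_def by (simp add: fun_eq_iff)

lemma reynolds_cong: "germ_eq f g \<Longrightarrow> germ_eq (reynolds f) (reynolds g)"
proof -
  assume "germ_eq f g"
  then have "\<forall>h\<in>G. eventually (\<lambda>z. f (h *v z) = g (h *v z)) (nhds 0)"
    using germ_eq_linear_comp unfolding germ_eq_def by blast
  then have "eventually (\<lambda>z. \<forall>h\<in>G. f (h *v z) = g (h *v z)) (nhds 0)"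
    using finite_G by (simp add: eventually_ball_finite_distrib)
  then show ?thesis
    unfolding germ_eq_def reynolds_def by (rule eventually_mono) simp
qed

lemma reynolds_mult_invariant:
  assumes "p \<in> inv_germs G"
  shows "germ_eq (reynolds (\<lambda>z. p z * h z)) (\<lambda>z. p z * reynolds h z)"
  unfolding germ_eq_def
proof (rule eventually_mono[OF inv_germs_eventually_invariant[OF assms]])
  fix z assume "\<forall>g\<in>G. p (g *v z) = p z"
  then show "reynolds (\<lambda>z. p z * h z) z = p z * reynolds h z"
    by (simp add: reynolds_def sum_distrib_left)
qed

lemma reynolds_germ_ideal_prods:
  "f \<in> germ_ideal (max_ideal_prods (inv_germs G) s) \<Longrightarrow> reynolds f \<in> ideal_pow (inv_germs G) s"
proof (induction f rule: germ_ideal.induct)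
  case zero
  then show ?case unfolding reynolds_zero by (rule zero_in_ideal_pow[OF const_in_inv_germs])
next
  case (gen a h)
  then have a: "a \<in> inv_germs G" using max_ideal_prods_subset_inv_germs by blast
  have "(\<lambda>z. a z * reynolds h z) \<in> ideal_pow (inv_germs G) s"
    using gen reynolds_in_inv_germs max_ideal_prods_mult_in_ideal_pow by blast
  moreover have "reynolds (\<lambda>z. a z * h z) \<in> inv_germs G"
    using gen a by (auto intro!: reynolds_in_inv_germs holo_germ_mult intro: holo_germ_inv_germs)
  ultimately show ?case using reynolds_mult_invariant[OF a] ideal_pow_cong by blast
next
  case (add f g)
  then show ?case unfolding reynolds_add by (intro ideal_pow_add) (auto intro: inv_germs_add)
next
  case (cong f g)
  have "\<forall>a\<in>max_ideal_prods (inv_germs G) s. holo_germ a"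
    using max_ideal_prods_subset_inv_germs holo_germ_inv_germs by blast
  then have "holo_germ f" by (rule holo_germ_germ_ideal[OF cong.hyps(1)])
  then have "holo_germ g" using cong.hyps(2) by (blast intro: holo_germ_cong germ_eq_sym)
  then show ?case
    using ideal_pow_cong[OF reynolds_in_inv_germs reynolds_cong[OF cong.hyps(2)] cong.IH] by blast
qed

section \<open>Noether's bound\<close>

text \<open>The coefficient of \<open>T\<^sup>N\<^sup>-\<^sup>j\<close> in \<open>\<Prod>\<^sub>g\<^sub>\<in>\<^sub>G (T - x (g z))\<close>.\<close>

definition orbit_poly_coeff :: "(complex^'n \<Rightarrow> complex) \<Rightarrow> nat \<Rightarrow> complex^'n \<Rightarrow> complex" where
  "orbit_poly_coeff x j z = (\<Sum>B\<in>{B \<in> Pow G. card B = j}. \<Prod>a\<in>B. - x (a *v z))"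

lemma finite_card_subsets: "finite {B \<in> Pow G. card B = j}"
  using finite_G by (rule finite_subset[rotated, OF finite_Pow_iff[THEN iffD2]]) auto

lemma orbit_poly_coeff_0: "orbit_poly_coeff x 0 z = 1"
proof -
  have "{B \<in> Pow G. card B = 0} = {{}}"
    using finite_G by (auto dest: finite_subset)
  then show ?thesis unfolding orbit_poly_coeff_def by simp
qed

text \<open>\<open>x z\<close> is a root of the orbit polynomial since \<open>mat 1 \<in> G\<close>.\<close>

lemma power_card_eq_orbit_poly:
  "x z ^ card G = (\<Sum>j<card G. orbit_poly_coeff x (Suc j) z * (- (x z ^ (card G - Suc j))))"
proof -
  let ?N = "card G"
  let ?P = "\<lambda>B. \<Prod>a\<in>B. - x (a *v z)"
  have "0 = (\<Prod>a\<in>G. - x (a *v z) + x z)"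
    using one_in_G by (intro prod_zero[OF finite_G, symmetric]) (auto intro!: bexI[of _ "mat 1"])
  also have "\<dots> = (\<Sum>B\<in>Pow G. ?P B * (\<Prod>a\<in>G - B. x z))"
    by (rule prod_add[OF finite_G])
  also have "\<dots> = (\<Sum>B\<in>Pow G. ?P B * x z ^ (?N - card B))"
    using finite_G by (intro sum.cong) (auto simp: card_Diff_subset finite_subset)
  also have "\<dots> = (\<Sum>j\<le>?N. \<Sum>B\<in>{B \<in> Pow G. card B = j}. ?P B * x z ^ (?N - card B))"
    by (rule sum.group[symmetric]) (use finite_G in \<open>auto intro: card_mono\<close>)
  also have "\<dots> = (\<Sum>j\<le>?N. orbit_poly_coeff x j z * x z ^ (?N - j))"
    unfolding orbit_poly_coeff_def sum_distrib_right by (intro sum.cong) auto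
  also have "\<dots> = x z ^ ?N + (\<Sum>j<?N. orbit_poly_coeff x (Suc j) z * x z ^ (?N - Suc j))"
    by (subst sum.atMost_shift) (simp add: orbit_poly_coeff_0)
  finally show ?thesis
    by (simp add: eq_neg_iff_add_eq_0 sum_negf)
qed

lemma orbit_poly_coeff_invariant:
  assumes "h \<in> G"
  shows "orbit_poly_coeff x j (h *v z) = orbit_poly_coeff x j z"
proof -
  let ?S = "{B \<in> Pow G. card B = j}"
  let ?f = "\<lambda>g. g ** h"
  let ?P = "\<lambda>B. \<Prod>a\<in>B. - x (a *v z)"
  have "orbit_poly_coeff x j (h *v z) = (\<Sum>B\<in>?S. ?P (?f ` B))"
    unfolding orbit_poly_coeff_def using inj_on_mult_right[OF assms]
    by (intro sum.cong) (auto simp: prod.reindex[OF inj_on_mult_right[OF assms]] matrix_vector_mul_assoc)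
  also have "\<dots> = (\<Sum>B\<in>?S. ?P B)"
  proof (rule sum.reindex_bij_betw)
    have inj: "inj_on (image ?f) ?S"
      using inj_on_image_Pow[OF inj_on_mult_right[OF assms]] by (rule inj_on_subset) auto
    have "image ?f ` ?S \<subseteq> ?S"
      using assms mult_closed by (auto simp: card_image[OF inj_on_mult_right[OF assms]])
    with inj show "bij_betw (image ?f) ?S ?S"
      using endo_inj_surj[OF finite_card_subsets] by (simp add: bij_betw_def)
  qed
  finally show ?thesis unfolding orbit_poly_coeff_def .
qed

lemma orbit_poly_coeff_in_max_ideal:
  assumes x: "x \<in> max_ideal holo_germs"
  shows "orbit_poly_coeff x (Suc j) \<in> max_ideal (inv_germs G)"
proof -
  have hx: "holo_germ x" and x0: "x 0 = 0" using x by (auto simp: max_ideal_holo_germs_iff)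
  have "holo_germ (orbit_poly_coeff x (Suc j))"
    unfolding orbit_poly_coeff_def using finite_G
    by (intro holo_germ_sum[OF finite_card_subsets] holo_germ_prod holo_germ_uminus holo_germ_linear_comp hx)
       (auto intro: finite_subset)
  moreover have "orbit_poly_coeff x (Suc j) 0 = 0"
    unfolding orbit_poly_coeff_def using finite_G x0
    by (intro sum.neutral ballI) (auto intro: finite_subset)
  ultimately show ?thesis
    unfolding max_ideal_def inv_germs_def using orbit_poly_coeff_invariant by auto
qed

lemma power_card_in_germ_ideal:
  assumes x: "x \<in> max_ideal holo_germs"
  shows "(\<lambda>z. x z ^ card G) \<in> germ_ideal (max_ideal (inv_germs G))"
proof -
  have "holo_germ x" using x by (simp add: max_ideal_holo_germs_iff)
  then have "(\<lambda>z. \<Sum>j<card G. orbit_poly_coeff x (Suc j) z * (- (x z ^ (card G - Suc j))))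
      \<in> germ_ideal (max_ideal (inv_germs G))"
    by (intro germ_ideal_sum germ_ideal.gen[OF orbit_poly_coeff_in_max_ideal[OF x]]
        holo_germ_uminus holo_germ_power)
  then show ?thesis by (subst power_card_eq_orbit_poly) simp
qed

text \<open>Polarisation: averaging \<open>(x + \<omega>\<^sup>l y)\<^sup>n\<close> against powers of a primitive \<open>(n+1)\<close>-st root of
  unity \<open>\<omega>\<close> isolates \<open>n x\<^sup>n\<^sup>-\<^sup>1 y\<close>, so one more factor \<open>y\<close> can be traded for one power of \<open>x\<close>.\<close>

lemma power_mult_prods_in_germ_ideal:
  "k \<le> card G \<Longrightarrow> x \<in> max_ideal holo_germs \<Longrightarrow> Y \<in> max_ideal_prods holo_germs k
    \<Longrightarrow> (\<lambda>z. x z ^ (card G - k) * Y z) \<in> germ_ideal (max_ideal (inv_germs G))"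
proof (induction k arbitrary: x Y)
  case 0
  then show ?case using power_card_in_germ_ideal by simp
next
  case (Suc k)
  then obtain y Y' where y: "y \<in> max_ideal holo_germs" and Y': "Y' \<in> max_ideal_prods holo_germs k"
    and Y: "Y = (\<lambda>z. y z * Y' z)" by auto
  define n where "n = card G - k"
  have n: "n \<ge> 1" using Suc.prems(1) n_def by simp
  define W where "W = (\<lambda>p::nat. exp (2 * of_real pi * \<i> * of_nat p / of_nat (Suc n) :: complex))"
  define c where "c = (of_nat (Suc n) * of_nat n :: complex)"
  have "c \<noteq> 0" using n unfolding c_def by (simp del: of_nat_Suc)
  have "(\<lambda>z. x z + W l * y z) \<in> max_ideal holo_germs" for l
    using Suc.prems(2) y by (auto simp: max_ideal_holo_germs_iff intro!: holo_germ_add holo_germ_mult holo_germ_const)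
  then have "(\<lambda>z. W (l * n) * ((x z + W l * y z) ^ n * Y' z)) \<in> germ_ideal (max_ideal (inv_germs G))" for l
    unfolding n_def using Suc.prems(1) Y' by (intro germ_ideal_cmult Suc.IH) auto
  then have "(\<lambda>z. inverse c * (\<Sum>l<Suc n. W (l * n) * ((x z + W l * y z) ^ n * Y' z)))
      \<in> germ_ideal (max_ideal (inv_germs G))"
    by (intro germ_ideal_cmult[OF germ_ideal_sum])
  moreover have "inverse c * (\<Sum>l<Suc n. W (l * n) * ((x z + W l * y z) ^ n * Y' z))
      = x z ^ (card G - Suc k) * Y z" for z
  proof -
    have "(\<Sum>l<Suc n. W (l * n) * ((x z + W l * y z) ^ n * Y' z))
        = (\<Sum>l<Suc n. W (l * n) * (x z + W l * y z) ^ n) * Y' z"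
      by (subst sum_distrib_right) (simp add: mult.assoc)
    also have "\<dots> = c * (x z ^ (n - 1) * Y z)"
      using root_unity_filter_linear_term[OF n, of "x z" "y z"]
      unfolding W_def c_def Y by (simp add: mult_ac)
    finally show ?thesis
      using \<open>c \<noteq> 0\<close> by (simp add: n_def)
  qed
  ultimately show ?case by simp
qed

lemma max_ideal_prods_card_in_germ_ideal:
  "q \<in> max_ideal_prods holo_germs (card G) \<Longrightarrow> q \<in> germ_ideal (max_ideal (inv_germs G))"
  using power_mult_prods_in_germ_ideal[of "card G" "\<lambda>_. 0" q]
  by (simp add: max_ideal_holo_germs_iff holo_germ_const)

lemma max_ideal_prods_card_mult_in_germ_ideal:
  "q \<in> max_ideal_prods holo_germs (card G * s) \<Longrightarrow> q \<in> germ_ideal (max_ideal_prods (inv_germs G) s)"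
proof (induction s arbitrary: q)
  case 0
  then show ?case by (auto intro: germ_ideal_generator)
next
  case (Suc s)
  then have "q \<in> max_ideal_prods holo_germs (card G + card G * s)" by simp
  then obtain q1 q2 where q1: "q1 \<in> max_ideal_prods holo_germs (card G)"
    and q2: "q2 \<in> max_ideal_prods holo_germs (card G * s)" and q: "q = (\<lambda>z. q1 z * q2 z)"
    using max_ideal_prods_add by blast
  have "(\<lambda>z. q1 z * q2 z) \<in> germ_ideal (max_ideal_prods (inv_germs G) (Suc s))"
    using max_ideal_prods_card_in_germ_ideal[OF q1] Suc.IH[OF q2]
    by (rule germ_ideal_mult) (auto intro: germ_ideal_generator)
  then show ?case unfolding q .
qed

theorem noether_bound:
  assumes "\<phi> \<in> inv_germs G" and "\<phi> \<in> ideal_pow holo_germs (card G * s)"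
  shows "\<phi> \<in> ideal_pow (inv_germs G) s"
proof -
  have "\<phi> \<in> germ_ideal (max_ideal_prods holo_germs (card G * s))"
    using assms(2) by (rule ideal_pow_subset_germ_ideal_prods[rotated]) (simp add: holo_germs_eq)
  then have "\<phi> \<in> germ_ideal (max_ideal_prods (inv_germs G) s)"
    using germ_ideal_subset max_ideal_prods_card_mult_in_germ_ideal by blast
  then have "reynolds \<phi> \<in> ideal_pow (inv_germs G) s"
    by (rule reynolds_germ_ideal_prods)
  with assms(1) show ?thesis
    using germ_eq_reynolds ideal_pow_cong by blast
qed

lemma germ_ord_le_twice_card:
  assumes \<phi>: "\<phi> \<in> inv_germs G" "\<not> germ_eq \<phi> (\<lambda>_. 0)"
  shows "germ_ord holo_germs \<phi> \<le> 2 * card G * germ_ord (inv_germs G) \<phi>"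
proof -
  define M where "M = germ_ord holo_germs \<phi>"
  define s where "s = germ_ord (inv_germs G) \<phi>"
  have sub: "inv_germs G \<subseteq> holo_germs"
    using one_in_G by (intro inv_germs_antimono) simp
  obtain B where B: "\<forall>t. \<phi> \<in> ideal_pow holo_germs t \<longrightarrow> t \<le> B"
    using ideal_pow_holo_germs_bounded holo_germ_inv_germs \<phi> by blast
  then have BG: "\<forall>t. \<phi> \<in> ideal_pow (inv_germs G) t \<longrightarrow> t \<le> B"
    using ideal_pow_mono[OF sub] by blast
  have M: "\<phi> \<in> ideal_pow holo_germs M"
    unfolding M_def using \<phi>(1) sub B by (intro germ_ord_attained) auto
  show ?thesis
  proof (cases M)
    case 0
    then show ?thesis by (simp add: M_def)
  next
    case (Suc m)
    then have "\<phi> 0 = 0" using M ideal_pow_Suc_vanishes by blast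
    with \<phi>(1) have "\<phi> \<in> max_ideal (inv_germs G)" by (simp add: max_ideal_def)
    then have "\<phi> \<in> ideal_pow (inv_germs G) 1"
      using max_ideal_subset_ideal_pow_1[OF const_in_inv_germs] by blast
    then have s1: "1 \<le> s" unfolding s_def using BG by (rule germ_ord_greatest)
    have "\<phi> \<in> ideal_pow holo_germs (card G * (M div card G))"
      using M ideal_pow_antimono[of "card G * (M div card G)" M] by auto
    then have "\<phi> \<in> ideal_pow (inv_germs G) (M div card G)"
      using \<phi>(1) by (intro noether_bound)
    then have "M div card G \<le> s" unfolding s_def using BG by (rule germ_ord_greatest)
    have "M < card G * (M div card G + 1)"
      using card_G_pos by (simp add: dividend_less_times_div)
    also have "\<dots> \<le> card G * (2 * s)"
      using \<open>M div card G \<le> s\<close> s1 by (intro mult_le_mono2) linarith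
    finally show ?thesis unfolding M_def s_def by (simp add: mult_ac)
  qed
qed

end

theorem lemma3p4:
  fixes G :: "(complex^'n^'n) set"
  assumes "finite G"
    and "mat 1 \<in> G"
    and "\<forall>g\<in>G. \<forall>h\<in>G. g ** h \<in> G"
    and "\<forall>g\<in>G. invertible g"
    and "\<forall>g\<in>G. \<forall>v. v \<noteq> 0 \<and> g *v v = v \<longrightarrow> g = mat 1"
  shows "\<exists>C::real. C \<ge> 1 \<and>
     (\<forall>\<phi>. \<phi> \<in> inv_germs G \<and> \<not> germ_eq \<phi> (\<lambda>_. 0) \<longrightarrow>
        germ_ord (inv_germs G) \<phi> \<le> germ_ord (inv_germs {mat 1}) \<phi> \<and>
        real (germ_ord (inv_germs {mat 1}) \<phi>) \<le> C * real (germ_ord (inv_germs G) \<phi>)) \<and>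
     (G = {mat 1} \<longrightarrow> C = 1)"
proof -
  interpret finite_matrix_group G
    using assms(1-4) by unfold_locales
  define C where "C = (if G = {mat 1} then 1 else 2 * real (card G))"
  have "real (germ_ord holo_germs \<phi>) \<le> C * real (germ_ord (inv_germs G) \<phi>)"
    if "\<phi> \<in> inv_germs G" "\<not> germ_eq \<phi> (\<lambda>_. 0)" for \<phi>
  proof (cases "G = {mat 1}")
    case False
    have "real (germ_ord holo_germs \<phi>) \<le> real (2 * card G * germ_ord (inv_germs G) \<phi>)"
      using germ_ord_le_twice_card[OF that] by (rule of_nat_mono)
    with False show ?thesis unfolding C_def by simp
  qed (simp add: C_def)
  moreover have "1 \<le> C"
    using card_G_pos by (simp add: C_def)
  ultimately show ?thesis
    using germ_ord_inv_germs_le[OF assms(2)] by (intro exI[of _ C]) (auto simp: C_def)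
qed

end
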